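(* Let $T$ be a tree and let $G$ be the simple graph obtained from the disjoint union of $T$ and an isolated vertex $u^*$ by adding $t$ edges joining $u^*$ to $t$ distinct vertices of $T$, where $1\le t\le v(T)$. Then $\phi(G)=\lfloor t/2\rfloor$.
   Context: $v(T)$ is the number of vertices of $T$. For a graph $G$, $\phi(G)$ is the maximum number of pairwise edge-disjoint cycles in $G$. *)

theory Defs
  imports Main
begin

definition simple_graph :: "'a set \<Rightarrow> 'a set set \<Rightarrow> bool" where
  "simple_graph V E \<longleftrightarrow> finite V \<and>
     (\<forall>e\<in>E. \<exists>x y. x \<in> V \<and> y \<in> V \<and> x \<noteq> y \<and> e = {x, y})"

definition is_cycle_list :: "'a set set \<Rightarrow> 'a list \<Rightarrow> bool" where
  "is_cycle_list E vs \<longleftrightarrow> 3 \<le> length vs \<and> distinct vs \<and>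
     (\<forall>i < length vs. {vs ! i, vs ! ((i + 1) mod length vs)} \<in> E)"

definition cycle_edges :: "'a list \<Rightarrow> 'a set set" where
  "cycle_edges vs = {{vs ! i, vs ! ((i + 1) mod length vs)} | i. i < length vs}"

definition cycles :: "'a set set \<Rightarrow> 'a set set set" where
  "cycles E = {cycle_edges vs | vs. is_cycle_list E vs}"

definition phi :: "'a set \<Rightarrow> 'a set set \<Rightarrow> nat" where
  "phi V E = Max {card C | C. C \<subseteq> cycles E \<and> pairwise disjnt C}"

definition graph_connected :: "'a set \<Rightarrow> 'a set set \<Rightarrow> bool" where
  "graph_connected V E \<longleftrightarrow>
     (\<forall>x\<in>V. \<forall>y\<in>V. (x, y) \<in> {(a, b). {a, b} \<in> E}\<^sup>*)"

definition is_tree :: "'a set \<Rightarrow> 'a set set \<Rightarrow> bool" where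
  "is_tree V E \<longleftrightarrow> simple_graph V E \<and> V \<noteq> {} \<and> graph_connected V E \<and> cycles E = {}"

end

(*
  Since T is acyclic, every cycle of G passes through u* and uses two of the t edges at u*;
  hence edge-disjoint cycles number at most t/2.  Conversely, pair up 2 floor(t/2) neighbours
  of u* and join each pair by a walk in T.  A family of such walks of minimal total length
  consists of paths (a repeated vertex could be cut out) which are pairwise edge-disjoint
  (two walks sharing an edge ab could be cut at ab and reconnected into two shorter walks
  joining the same four ends).  Closing each path through u* gives floor(t/2) edge-disjoint
  cycles.
*)
theory Submission
  imports Defs
begin

fun walk_edges :: "'a list \<Rightarrow> 'a set set" where
  "walk_edges (x # y # r) = insert {x, y} (walk_edges (y # r))"
| "walk_edges _ = {}"

lemma walk_edges_append:
  assumes "xs \<noteq> []" "ys \<noteq> []"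
  shows "walk_edges (xs @ ys) = walk_edges xs \<union> insert {last xs, hd ys} (walk_edges ys)"
  using assms(1)
proof (induction xs rule: walk_edges.induct)
  case (1 x y r)
  then show ?case by auto
next
  case ("2_2" x)
  then show ?case using assms(2) by (cases ys) auto
qed simp

lemma walk_edges_Cons: "ys \<noteq> [] \<Longrightarrow> walk_edges (x # ys) = insert {x, hd ys} (walk_edges ys)"
  using walk_edges_append[of "[x]" ys] by simp

lemma walk_edges_snoc: "xs \<noteq> [] \<Longrightarrow> walk_edges (xs @ [y]) = insert {last xs, y} (walk_edges xs)"
  using walk_edges_append[of xs "[y]"] by simp

lemma walk_edges_append_Cons: "walk_edges (xs @ y # ys) = walk_edges (xs @ [y]) \<union> walk_edges (y # ys)"
  by (cases "xs = []") (simp_all add: walk_edges_append walk_edges_snoc walk_edges_Cons)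

lemma walk_edges_prefix: "walk_edges xs \<subseteq> walk_edges (xs @ ys)"
  by (cases "xs = [] \<or> ys = []") (auto simp: walk_edges_append)

lemma walk_edges_suffix: "walk_edges ys \<subseteq> walk_edges (xs @ ys)"
  by (cases "xs = [] \<or> ys = []") (auto simp: walk_edges_append)

lemma walk_edges_rev: "walk_edges (rev w) = walk_edges w"
proof (induction w rule: walk_edges.induct)
  case (1 x y r)
  have "walk_edges (rev (x # y # r)) = walk_edges ((rev r @ [y]) @ [x])" by simp
  also have "\<dots> = insert {y, x} (walk_edges (y # r))"
    using 1 walk_edges_snoc[of "rev r @ [y]" x] by simp
  finally show ?case by (simp add: insert_commute)
qed simp_all

lemma walk_edges_conv_nth: "walk_edges w = {{w ! i, w ! Suc i} | i. Suc i < length w}"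
proof (induction w rule: walk_edges.induct)
  case (1 x y r)
  show ?case
  proof (rule set_eqI, standard)
    fix e assume "e \<in> walk_edges (x # y # r)"
    then show "e \<in> {{(x # y # r) ! i, (x # y # r) ! Suc i} | i. Suc i < length (x # y # r)}"
      using 1 by (auto intro: exI[of _ 0] exI[of _ "Suc _"])
  next
    fix e assume "e \<in> {{(x # y # r) ! i, (x # y # r) ! Suc i} | i. Suc i < length (x # y # r)}"
    then obtain i where "Suc i < length (x # y # r)" "e = {(x # y # r) ! i, (x # y # r) ! Suc i}"
      by blast
    then show "e \<in> walk_edges (x # y # r)" using 1 by (cases i) auto
  qed
qed simp_all

lemma walk_edges_decomp: "e \<in> walk_edges w \<Longrightarrow> \<exists>xs a b ys. w = xs @ a # b # ys \<and> e = {a, b}"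
proof (induction w rule: walk_edges.induct)
  case (1 x y r)
  show ?case
  proof (cases "e = {x, y}")
    case True
    then show ?thesis by (intro exI[of _ "[]"]) auto
  next
    case False
    then obtain xs a b ys where "y # r = xs @ a # b # ys" "e = {a, b}" using 1 by auto
    then show ?thesis by (intro exI[of _ "x # xs"]) auto
  qed
qed simp_all

lemma set_subset_Union_walk_edges: "2 \<le> length w \<Longrightarrow> set w \<subseteq> \<Union> (walk_edges w)"
proof (induction w rule: walk_edges.induct)
  case (1 x y r)
  then show ?case by (cases r) auto
qed simp_all

lemma cycle_edges_conv_walk_edges:
  assumes "vs \<noteq> []"
  shows "cycle_edges vs = walk_edges (vs @ [hd vs])"
proof -
  have "(vs @ [hd vs]) ! Suc i = vs ! (Suc i mod length vs)" if "i < length vs" for i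
  proof -
    have "Suc i mod length vs = (if Suc i < length vs then Suc i else 0)"
    proof (cases "Suc i < length vs")
      case False
      with that have "Suc i = length vs" by simp
      then show ?thesis by simp
    qed simp
    then show ?thesis using that assms by (auto simp: nth_append hd_conv_nth)
  qed
  then show ?thesis
    unfolding cycle_edges_def walk_edges_conv_nth by (force simp: nth_append)
qed

lemma finite_cycle_edges: "finite (cycle_edges vs)"
  unfolding cycle_edges_def by simp

lemma cycle_edges_Cons:
  assumes "P \<noteq> []"
  shows "cycle_edges (u # P) = insert {u, hd P} (insert {u, last P} (walk_edges P))"
  using assms by (simp add: cycle_edges_conv_walk_edges walk_edges_Cons walk_edges_snoc insert_commute)

lemma cycle_edges_rotate1: "cycle_edges (rotate1 vs) = cycle_edges vs"
proof (cases vs)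
  case (Cons x xs)
  then show ?thesis
    by (cases "xs = []") (auto simp: cycle_edges_conv_walk_edges walk_edges_append walk_edges_Cons)
qed simp

lemma cycle_edges_rotate: "cycle_edges (rotate n vs) = cycle_edges vs"
  by (induction n) (simp_all add: cycle_edges_rotate1)

lemma is_cycle_list_iff:
  "is_cycle_list E vs \<longleftrightarrow> 3 \<le> length vs \<and> distinct vs \<and> cycle_edges vs \<subseteq> E"
  unfolding is_cycle_list_def cycle_edges_def by blast

lemma cycle_edges_subset_set:
  assumes "e \<in> cycle_edges vs"
  shows "e \<subseteq> set vs"
proof -
  obtain i where i: "i < length vs" and e: "e = {vs ! i, vs ! ((i + 1) mod length vs)}"
    using assms unfolding cycle_edges_def by blast
  from i have "0 < length vs" by (cases vs) auto
  then have "(i + 1) mod length vs < length vs" by simp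
  then show ?thesis using i e by simp
qed

definition walk :: "'a set set \<Rightarrow> 'a list \<Rightarrow> bool" where
  "walk E P \<longleftrightarrow> P \<noteq> [] \<and> walk_edges P \<subseteq> E"

definition walk_ends :: "'a list \<Rightarrow> 'a set" where
  "walk_ends P = {hd P, last P}"

definition walk_pairing :: "'a set set \<Rightarrow> 'a set \<Rightarrow> 'a list set \<Rightarrow> bool" where
  "walk_pairing E A Ps \<longleftrightarrow> finite Ps \<and>
     (\<forall>P\<in>Ps. walk E P \<and> hd P \<noteq> last P \<and> walk_ends P \<subseteq> A) \<and>
     pairwise (\<lambda>P Q. disjnt (walk_ends P) (walk_ends Q)) Ps"

lemma walk_exists:
  assumes "(a, b) \<in> {(x, y). {x, y} \<in> E}\<^sup>*"
  shows "\<exists>w. walk E w \<and> hd w = a \<and> last w = b"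
  using assms
proof (induction rule: converse_rtrancl_induct)
  case base
  then show ?case by (intro exI[of _ "[b]"]) (simp add: walk_def)
next
  case (step y z)
  then obtain w where "walk E w" "hd w = z" "last w = b" by blast
  with step show ?case by (intro exI[of _ "y # w"]) (auto simp: walk_def walk_edges_Cons)
qed

lemma walk_pairingD:
  assumes "walk_pairing E A Ps" "P \<in> Ps"
  shows "walk E P" "hd P \<noteq> last P" "walk_ends P \<subseteq> A"
  using assms unfolding walk_pairing_def by blast+

lemma walk_pairing_disjnt_ends:
  "walk_pairing E A Ps \<Longrightarrow> P \<in> Ps \<Longrightarrow> Q \<in> Ps \<Longrightarrow> P \<noteq> Q \<Longrightarrow>
    disjnt (walk_ends P) (walk_ends Q)"
  unfolding walk_pairing_def pairwise_def by blast

lemma walk_pairing_exists: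
  assumes "graph_connected V E" "A \<subseteq> V" "finite A" "2 * k \<le> card A"
  shows "\<exists>Ps. walk_pairing E A Ps \<and> card Ps = k"
  using assms(2-4)
proof (induction k arbitrary: A)
  case 0
  then show ?case by (intro exI[of _ "{}"]) (simp add: walk_pairing_def)
next
  case (Suc k)
  obtain B where "B \<subseteq> A" "card B = 2"
    using Suc.prems(3) obtain_subset_with_card_n[of 2 A] by auto
  then obtain a b where ab: "a \<in> A" "b \<in> A" "a \<noteq> b" by (auto simp: card_2_iff)
  have "card (A - {a, b}) = card A - 2"
    using ab Suc.prems(2) by (simp add: card_Diff_subset)
  then have "\<exists>Ps. walk_pairing E (A - {a, b}) Ps \<and> card Ps = k"
    using Suc.prems by (intro Suc.IH) auto
  then obtain Ps where Ps: "walk_pairing E (A - {a, b}) Ps" "card Ps = k" by blast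
  obtain w where w: "walk E w" "hd w = a" "last w = b"
    using walk_exists[of a b E] assms(1) ab Suc.prems(1) unfolding graph_connected_def by blast
  have "walk_ends w = {a, b}" using w by (simp add: walk_ends_def)
  moreover have "walk_ends P \<subseteq> A - {a, b}" if "P \<in> Ps" for P
    using walk_pairingD(3)[OF Ps(1) that] .
  ultimately have sep: "\<forall>P\<in>Ps. disjnt (walk_ends w) (walk_ends P)" and "w \<notin> Ps"
    by (fastforce simp: disjnt_def)+
  have "walk_pairing E A (insert w Ps)"
    unfolding walk_pairing_def
  proof (intro conjI)
    show "finite (insert w Ps)" using Ps(1) by (simp add: walk_pairing_def)
    show "\<forall>P\<in>insert w Ps. walk E P \<and> hd P \<noteq> last P \<and> walk_ends P \<subseteq> A"
      using walk_pairingD[OF Ps(1)] w ab \<open>walk_ends w = {a, b}\<close> by auto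
    show "pairwise (\<lambda>P Q. disjnt (walk_ends P) (walk_ends Q)) (insert w Ps)"
      using Ps(1) sep unfolding walk_pairing_def by (simp add: pairwise_insert disjnt_sym)
  qed
  moreover have "card (insert w Ps) = Suc k"
    using Ps \<open>w \<notin> Ps\<close> unfolding walk_pairing_def by simp
  ultimately show ?case by blast
qed

lemma walk_pairing_exchange:
  assumes Ps: "walk_pairing E A Ps" and Old: "Old \<subseteq> Ps"
    and New: "walk_pairing E (\<Union> (walk_ends ` Old)) New" and card_New: "card New = card Old"
    and shorter: "sum length New < sum length Old"
  shows "\<exists>Ps'. walk_pairing E A Ps' \<and> card Ps' = card Ps \<and> sum length Ps' < sum length Ps"
proof -
  have fin: "finite Ps" "finite New" using Ps New unfolding walk_pairing_def by blast+
  have fin_Old: "finite Old" using Old fin(1) by (rule finite_subset)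
  have ends_Old: "\<Union> (walk_ends ` Old) \<subseteq> A"
    using walk_pairingD(3)[OF Ps] Old by blast
  have sep: "disjnt (walk_ends X) (walk_ends W)" if X: "X \<in> Ps - Old" and W: "W \<in> New" for X W
  proof -
    have "disjnt (walk_ends X) (walk_ends Y)" if "Y \<in> Old" for Y
      using walk_pairing_disjnt_ends[OF Ps] X Old that by blast
    then show ?thesis using walk_pairingD(3)[OF New W] by (auto simp: disjnt_def)
  qed
  have disj: "(Ps - Old) \<inter> New = {}"
    using sep by (fastforce simp: disjnt_def walk_ends_def)
  define Ps' where "Ps' = Ps - Old \<union> New"
  have "walk_pairing E A Ps'"
    unfolding walk_pairing_def
  proof (intro conjI)
    show "finite Ps'" using fin by (simp add: Ps'_def)
    show "\<forall>P\<in>Ps'. walk E P \<and> hd P \<noteq> last P \<and> walk_ends P \<subseteq> A"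
      using walk_pairingD[OF Ps] walk_pairingD[OF New] ends_Old unfolding Ps'_def by blast
    show "pairwise (\<lambda>P Q. disjnt (walk_ends P) (walk_ends Q)) Ps'"
    proof (rule pairwiseI)
      fix X Y assume "X \<in> Ps'" "Y \<in> Ps'" "X \<noteq> Y"
      then consider "X \<in> Ps - Old" "Y \<in> Ps - Old" | "X \<in> New" "Y \<in> New"
        | "X \<in> Ps - Old" "Y \<in> New" | "X \<in> New" "Y \<in> Ps - Old"
        unfolding Ps'_def by blast
      then show "disjnt (walk_ends X) (walk_ends Y)"
        using walk_pairing_disjnt_ends[OF Ps] walk_pairing_disjnt_ends[OF New] sep \<open>X \<noteq> Y\<close>
        by cases (auto simp: disjnt_sym)
    qed
  qed
  moreover have "card Ps' = card Ps"
    using fin fin_Old Old card_New disj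
    by (simp add: Ps'_def card_Un_disjoint card_Diff_subset card_mono)
  moreover have "sum length Ps' < sum length Ps"
    using fin fin_Old shorter disj sum.subset_diff[OF Old fin(1), of length]
    by (simp add: Ps'_def sum.union_disjoint)
  ultimately show ?thesis by blast
qed

lemma walk_pairing_shortcut:
  assumes Ps: "walk_pairing E A Ps" and P: "P \<in> Ps" and "\<not> distinct P"
  shows "\<exists>Ps'. walk_pairing E A Ps' \<and> card Ps' = card Ps \<and> sum length Ps' < sum length Ps"
proof -
  obtain xs y ys zs where P_eq: "P = xs @ y # ys @ y # zs"
    using not_distinct_decomp[OF \<open>\<not> distinct P\<close>] by auto
  define P' where "P' = xs @ y # zs"
  have "walk_edges P' = walk_edges (xs @ [y]) \<union> walk_edges (y # zs)"
    unfolding P'_def by (rule walk_edges_append_Cons)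
  also have "\<dots> \<subseteq> walk_edges P"
    using walk_edges_prefix[of "xs @ [y]" "ys @ y # zs"] walk_edges_suffix[of "y # zs" "xs @ y # ys"]
    by (simp add: P_eq)
  finally have "walk_edges P' \<subseteq> walk_edges P" .
  moreover have "hd P' = hd P" "last P' = last P"
    unfolding P'_def P_eq by (simp_all add: hd_append)
  ultimately have "walk_pairing E (walk_ends P) {P'}"
    using walk_pairingD[OF Ps P] by (auto simp: walk_pairing_def walk_def walk_ends_def P'_def)
  moreover have "length P' < length P" unfolding P'_def P_eq by simp
  ultimately show ?thesis using P by (intro walk_pairing_exchange[OF Ps, of "{P}"]) auto
qed

lemma splice_walks:
  assumes P: "P = p1 @ a # b # p2" "walk E P" "hd P \<noteq> last P"
    and Q: "Q = q1 @ a # b # q2" "walk E Q" "hd Q \<noteq> last Q"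
    and PQ: "disjnt (walk_ends P) (walk_ends Q)"
  defines "W1 \<equiv> p1 @ a # rev q1" and "W2 \<equiv> rev p2 @ b # q2"
  shows "walk_pairing E (walk_ends P \<union> walk_ends Q) {W1, W2}" "W1 \<noteq> W2"
    "length W1 + length W2 < length P + length Q"
proof -
  have ends: "hd W1 = hd P" "last W1 = hd Q" "hd W2 = last P" "last W2 = last Q"
    unfolding W1_def W2_def P(1) Q(1) by (simp_all add: hd_append last_rev hd_rev)
  have "walk_edges W1 = walk_edges (p1 @ [a]) \<union> walk_edges (rev (q1 @ [a]))"
    unfolding W1_def using walk_edges_append_Cons[of p1 a "rev q1"] by simp
  also have "\<dots> \<subseteq> walk_edges P \<union> walk_edges Q"
    using walk_edges_prefix[of "p1 @ [a]" "b # p2"] walk_edges_prefix[of "q1 @ [a]" "b # q2"]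
      walk_edges_rev[of "q1 @ [a]"]
    by (auto simp: P(1) Q(1))
  finally have W1_edges: "walk_edges W1 \<subseteq> walk_edges P \<union> walk_edges Q" .
  have "walk_edges W2 = walk_edges (rev (b # p2)) \<union> walk_edges (b # q2)"
    unfolding W2_def using walk_edges_append_Cons[of "rev p2" b q2] by simp
  also have "\<dots> \<subseteq> walk_edges P \<union> walk_edges Q"
    using walk_edges_suffix[of "b # p2" "p1 @ [a]"] walk_edges_suffix[of "b # q2" "q1 @ [a]"]
      walk_edges_rev[of "b # p2"]
    by (auto simp: P(1) Q(1))
  finally have W2_edges: "walk_edges W2 \<subseteq> walk_edges P \<union> walk_edges Q" .
  have "walk E W1" "walk E W2"
    using P(2) Q(2) W1_edges W2_edges unfolding walk_def W1_def W2_def by auto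
  moreover have "hd P \<noteq> hd Q" "hd P \<noteq> last Q" "last P \<noteq> hd Q" "last P \<noteq> last Q"
    using PQ by (auto simp: disjnt_def walk_ends_def)
  ultimately show "walk_pairing E (walk_ends P \<union> walk_ends Q) {W1, W2}" "W1 \<noteq> W2"
    using P(3) Q(3) ends by (auto simp: walk_pairing_def walk_ends_def disjnt_def pairwise_insert)
  show "length W1 + length W2 < length P + length Q"
    unfolding W1_def W2_def P(1) Q(1) by simp
qed

lemma walk_pairing_uncross:
  assumes Ps: "walk_pairing E A Ps" and PQ: "P \<in> Ps" "Q \<in> Ps" "P \<noteq> Q"
    and shared: "\<not> disjnt (walk_edges P) (walk_edges Q)"
  shows "\<exists>Ps'. walk_pairing E A Ps' \<and> card Ps' = card Ps \<and> sum length Ps' < sum length Ps"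
proof -
  obtain e where e: "e \<in> walk_edges P" "e \<in> walk_edges Q"
    using shared by (auto simp: disjnt_def)
  obtain p1 a b p2 where P_eq: "P = p1 @ a # b # p2" and e_eq: "e = {a, b}"
    using walk_edges_decomp[OF e(1)] by blast
  obtain Q' q1 q2 where Q': "Q' \<in> {Q, rev Q}" "Q' = q1 @ a # b # q2"
  proof -
    obtain q1 c d q2 where "Q = q1 @ c # d # q2" "{c, d} = {a, b}"
      using walk_edges_decomp[OF e(2)] e_eq by metis
    then consider "Q = q1 @ a # b # q2" | "rev Q = rev q2 @ a # b # rev q1"
      by (auto simp: doubleton_eq_iff)
    then show thesis using that by cases blast+
  qed
  have P_props: "walk E P" "hd P \<noteq> last P"
    using walk_pairingD[OF Ps PQ(1)] by blast+
  have Q'_props: "walk E Q'" "hd Q' \<noteq> last Q'" "walk_ends Q' = walk_ends Q" "length Q' = length Q"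
    using Q'(1) walk_pairingD[OF Ps PQ(2)]
    by (auto simp: walk_def walk_edges_rev walk_ends_def hd_rev last_rev)
  have "disjnt (walk_ends P) (walk_ends Q')"
    using walk_pairing_disjnt_ends[OF Ps PQ] Q'_props(3) by simp
  note splice = splice_walks[OF P_eq P_props Q'(2) Q'_props(1,2) this]
  show ?thesis
  proof (rule walk_pairing_exchange[OF Ps, of "{P, Q}"])
    show "{P, Q} \<subseteq> Ps" using PQ by blast
    show "walk_pairing E (\<Union> (walk_ends ` {P, Q})) {p1 @ a # rev q1, rev p2 @ b # q2}"
      using splice(1) Q'_props(3) by simp
    show "card {p1 @ a # rev q1, rev p2 @ b # q2} = card {P, Q}"
      using splice(2) PQ(3) by simp
    show "sum length {p1 @ a # rev q1, rev p2 @ b # q2} < sum length {P, Q}"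
      using splice(2,3) PQ(3) Q'_props(4) by simp
  qed
qed

lemma edge_disjoint_paths_exist:
  assumes "graph_connected V E" "A \<subseteq> V" "finite A" "2 * k \<le> card A"
  shows "\<exists>Ps. walk_pairing E A Ps \<and> card Ps = k \<and> (\<forall>P\<in>Ps. distinct P) \<and>
           pairwise (\<lambda>P Q. disjnt (walk_edges P) (walk_edges Q)) Ps"
proof -
  obtain Ps0 where "walk_pairing E A Ps0 \<and> card Ps0 = k"
    using walk_pairing_exists[OF assms] by blast
  then obtain Ps where Ps: "walk_pairing E A Ps \<and> card Ps = k"
    and minimal: "\<forall>Ps'. walk_pairing E A Ps' \<and> card Ps' = k \<longrightarrow> sum length Ps \<le> sum length Ps'"
    using ex_has_least_nat[of "\<lambda>Ps. walk_pairing E A Ps \<and> card Ps = k" Ps0 "sum length"] by blast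
  then have no_shorter:
    "\<not> (\<exists>Ps'. walk_pairing E A Ps' \<and> card Ps' = card Ps \<and> sum length Ps' < sum length Ps)"
    by (auto simp: not_less)
  have "distinct P" if "P \<in> Ps" for P
    using walk_pairing_shortcut[of E A Ps P] Ps that no_shorter by blast
  moreover have "pairwise (\<lambda>P Q. disjnt (walk_edges P) (walk_edges Q)) Ps"
    using walk_pairing_uncross[of E A Ps] Ps no_shorter by (blast intro: pairwiseI)
  ultimately show ?thesis using Ps by blast
qed

lemma cycle_meets_two_apex_edges:
  assumes c: "c \<in> cycles (E \<union> U)" and acyclic: "cycles E = {}"
    and E_avoids: "\<forall>e\<in>E. u \<notin> e" and U_hits: "\<forall>e\<in>U. u \<in> e"
  shows "2 \<le> card (c \<inter> U)"
proof -
  obtain vs where c_eq: "c = cycle_edges vs" and vs: "is_cycle_list (E \<union> U) vs"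
    using c unfolding cycles_def by blast
  have vs_props: "3 \<le> length vs" "distinct vs" "c \<subseteq> E \<union> U"
    using vs unfolding is_cycle_list_iff c_eq by blast+
  have "u \<in> set vs"
  proof (rule ccontr)
    assume "u \<notin> set vs"
    then have "cycle_edges vs \<subseteq> E"
      using vs_props(3) U_hits cycle_edges_subset_set unfolding c_eq by blast
    then have "c \<in> cycles E"
      using vs_props unfolding c_eq cycles_def is_cycle_list_iff by blast
    then show False using acyclic by blast
  qed
  then obtain ys zs where vs_eq: "vs = ys @ u # zs" by (meson split_list)
  define P where "P = zs @ ys"
  have rot: "rotate (length ys) vs = u # P"
    unfolding vs_eq P_def by (simp add: rotate_append)
  then have "distinct (u # P)" "3 \<le> length (u # P)"
    using vs_props(1,2) by (metis distinct_rotate length_rotate)+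
  then have P: "P \<noteq> []" "hd P \<noteq> last P" "u \<noteq> hd P" "u \<noteq> last P"
    by (cases P; auto)+
  have "c = insert {u, hd P} (insert {u, last P} (walk_edges P))"
    using cycle_edges_rotate[of "length ys" vs] cycle_edges_Cons[OF P(1), of u] rot c_eq by simp
  then have "{{u, hd P}, {u, last P}} \<subseteq> c \<inter> U"
    using vs_props(3) E_avoids by auto
  moreover have "finite (c \<inter> U)" using finite_cycle_edges c_eq by blast
  ultimately have "card {{u, hd P}, {u, last P}} \<le> card (c \<inter> U)" by (rule card_mono[rotated])
  then show ?thesis using P by (simp add: doubleton_eq_iff)
qed

lemma card_edge_disjoint_apex_cycles_le:
  assumes C: "C \<subseteq> cycles (E \<union> U)" "pairwise disjnt C"
    and "cycles E = {}" "\<forall>e\<in>E. u \<notin> e" "\<forall>e\<in>U. u \<in> e" "finite U"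
  shows "2 * card C \<le> card U"
proof (cases "finite C")
  case True
  have "2 * card C \<le> (\<Sum>c\<in>C. card (c \<inter> U))"
    using sum_bounded_below[of C 2 "\<lambda>c. card (c \<inter> U)"]
      cycle_meets_two_apex_edges[of _ E U u] C(1) assms(3-5)
    by (auto simp: mult.commute)
  also have "\<dots> = card (\<Union>c\<in>C. c \<inter> U)"
    using True \<open>finite U\<close> C(2)
    by (intro card_UN_disjoint[symmetric]) (auto simp: pairwise_def disjnt_def)
  also have "\<dots> \<le> card U"
    using \<open>finite U\<close> by (intro card_mono) auto
  finally show ?thesis .
qed simp

lemma phi_eqI:
  assumes "C \<subseteq> cycles E" "pairwise disjnt C" "card C = k"
    and "\<And>C'. C' \<subseteq> cycles E \<Longrightarrow> pairwise disjnt C' \<Longrightarrow> card C' \<le> k"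
  shows "phi V E = k"
proof -
  let ?M = "{card C | C. C \<subseteq> cycles E \<and> pairwise disjnt C}"
  have "?M \<subseteq> {..k}" using assms(4) by blast
  then have "finite ?M" by (rule finite_subset) simp
  then show ?thesis unfolding phi_def using assms by (intro Max_eqI) blast+
qed

lemma simple_graph_edges_subset: "simple_graph V E \<Longrightarrow> e \<in> E \<Longrightarrow> e \<subseteq> V"
  unfolding simple_graph_def by fastforce

lemma edge_disjoint_apex_cycles_exist:
  assumes conn: "graph_connected V E" and E_sub: "\<forall>e\<in>E. e \<subseteq> V" and u: "u \<notin> V"
    and S: "S \<subseteq> V" "finite S" "2 * k \<le> card S"
  shows "\<exists>C. C \<subseteq> cycles (E \<union> (\<lambda>x. {u, x}) ` S) \<and> pairwise disjnt C \<and> card C = k"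
proof -
  obtain Ps where Ps: "walk_pairing E S Ps" "card Ps = k" and distinct: "\<forall>P\<in>Ps. distinct P"
    and edge_disjoint: "pairwise (\<lambda>P Q. disjnt (walk_edges P) (walk_edges Q)) Ps"
    using edge_disjoint_paths_exist[OF conn S] by blast
  have E_avoids: "\<forall>e\<in>E. u \<notin> e" using E_sub u by blast
  have P_props: "P \<noteq> []" "walk_edges P \<subseteq> E" "hd P \<noteq> last P" "walk_ends P \<subseteq> S"
      "2 \<le> length P" "u \<notin> set P"
    if "P \<in> Ps" for P
  proof -
    show P: "P \<noteq> []" "walk_edges P \<subseteq> E" "hd P \<noteq> last P" "walk_ends P \<subseteq> S"
      using walk_pairingD[OF Ps(1) that] unfolding walk_def by blast+
    then show len: "2 \<le> length P" by (cases P; cases "tl P") auto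
    show "u \<notin> set P"
      using set_subset_Union_walk_edges[OF len] P(2) E_avoids by blast
  qed
  define cyc where "cyc P = cycle_edges (u # P)" for P
  have cyc_eq: "cyc P = (\<lambda>x. {u, x}) ` walk_ends P \<union> walk_edges P" if "P \<in> Ps" for P
    using cycle_edges_Cons[OF P_props(1)[OF that]] by (simp add: cyc_def walk_ends_def)
  have cyc_cycle: "cyc P \<in> cycles (E \<union> (\<lambda>x. {u, x}) ` S)" if "P \<in> Ps" for P
  proof -
    have "cyc P \<subseteq> E \<union> (\<lambda>x. {u, x}) ` S"
      using cyc_eq[OF that] P_props(2,4)[OF that] by auto
    then have "is_cycle_list (E \<union> (\<lambda>x. {u, x}) ` S) (u # P)"
      using P_props(5,6)[OF that] distinct that by (simp add: is_cycle_list_iff cyc_def)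
    then show ?thesis unfolding cycles_def cyc_def by blast
  qed
  have cyc_disjnt: "disjnt (cyc P) (cyc Q)" if PQ: "P \<in> Ps" "Q \<in> Ps" "P \<noteq> Q" for P Q
  proof -
    have ends: "disjnt (walk_ends P) (walk_ends Q)"
      using walk_pairing_disjnt_ends[OF Ps(1) PQ] .
    have edges: "disjnt (walk_edges P) (walk_edges Q)"
      using edge_disjoint PQ unfolding pairwise_def by blast
    have "u \<notin> walk_ends P" "u \<notin> walk_ends Q"
      using P_props(1,6)[OF PQ(1)] P_props(1,6)[OF PQ(2)] unfolding walk_ends_def by auto
    with ends have "disjnt ((\<lambda>x. {u, x}) ` walk_ends P) ((\<lambda>x. {u, x}) ` walk_ends Q)"
      by (auto simp: disjnt_def doubleton_eq_iff)
    moreover have "\<forall>e\<in>walk_edges P \<union> walk_edges Q. u \<notin> e"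
      using P_props(2) PQ E_avoids by blast
    then have "disjnt ((\<lambda>x. {u, x}) ` walk_ends P) (walk_edges Q)"
        "disjnt (walk_edges P) ((\<lambda>x. {u, x}) ` walk_ends Q)"
      unfolding disjnt_def by blast+
    ultimately show ?thesis
      using edges unfolding cyc_eq[OF PQ(1)] cyc_eq[OF PQ(2)] by (simp add: disjnt_Un1 disjnt_Un2)
  qed
  have "inj_on cyc Ps"
  proof (rule inj_onI, rule ccontr)
    fix P Q assume PQ: "P \<in> Ps" "Q \<in> Ps" "cyc P = cyc Q" "P \<noteq> Q"
    have "{u, hd P} \<in> cyc P" using cyc_eq[OF PQ(1)] unfolding walk_ends_def by blast
    then show False using cyc_disjnt[OF PQ(1,2,4)] PQ(3) unfolding disjnt_def by blast
  qed
  then have "card (cyc ` Ps) = k" using Ps(2) by (simp add: card_image)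
  moreover have "pairwise disjnt (cyc ` Ps)"
    using cyc_disjnt by (auto simp: pairwise_image intro: pairwiseI)
  moreover have "cyc ` Ps \<subseteq> cycles (E \<union> (\<lambda>x. {u, x}) ` S)"
    using cyc_cycle by blast
  ultimately show ?thesis by blast
qed

theorem lemma2p2:
  fixes V :: "'a set" and E :: "'a set set" and u :: 'a and S :: "'a set" and t :: nat
  assumes "is_tree V E"
    and "u \<notin> V"
    and "S \<subseteq> V"
    and "card S = t"
    and "1 \<le> t" and "t \<le> card V"
  shows "phi (insert u V) (E \<union> (\<lambda>x. {u, x}) ` S) = t div 2"
proof -
  have tree: "simple_graph V E" "graph_connected V E" "cycles E = {}"
    using assms(1) unfolding is_tree_def by blast+
  have E_sub: "\<forall>e\<in>E. e \<subseteq> V" using simple_graph_edges_subset[OF tree(1)] by blast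
  have "finite S" using assms(3) tree(1) finite_subset unfolding simple_graph_def by blast
  have E_avoids: "\<forall>e\<in>E. u \<notin> e" using E_sub assms(2) by blast
  obtain C where "C \<subseteq> cycles (E \<union> (\<lambda>x. {u, x}) ` S)" "pairwise disjnt C" "card C = t div 2"
    using edge_disjoint_apex_cycles_exist[OF tree(2) E_sub assms(2,3) \<open>finite S\<close>, of "t div 2"]
      assms(4) by auto
  moreover have "card C' \<le> t div 2"
    if "C' \<subseteq> cycles (E \<union> (\<lambda>x. {u, x}) ` S)" "pairwise disjnt C'" for C'
  proof -
    have "2 * card C' \<le> card ((\<lambda>x. {u, x}) ` S)"
      using \<open>finite S\<close> by (intro card_edge_disjoint_apex_cycles_le[OF that tree(3) E_avoids]) auto
    also have "\<dots> \<le> t" using card_image_le[OF \<open>finite S\<close>] assms(4) by simp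
    finally show ?thesis by linarith
  qed
  ultimately show ?thesis by (rule phi_eqI)
qed

end
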